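(* Let $\mathbf{X}$ be a finitely supported real random variable with $\mathbf{E}[\mathbf{X}]=0$ and $\mathrm{Var}[\mathbf{X}]=1$ that takes at most $\ell$ distinct values, and let $d\ge 1$ and $s\ge 1$ be natural numbers. Then there do not exist (for any $n$) two multilinear polynomials $p,q$ of degree at most $d$ over $\mathbb{R}^n$ with $\mathrm{sparsity}(p)=s$ and $\mathrm{sparsity}(q)>\Phi(d,s,\ell)$ such that $p(\mathbf{X}^{\otimes n})$ and $q(\mathbf{X}^{\otimes n})$ are identically distributed. Consequently $\mathrm{Max\text{-}Sparsity\text{-}Gap}_{\mathbf{X},d}(s)$ is well defined and \[ \mathrm{Max\text{-}Sparsity\text{-}Gap}_{\mathbf{X},d}(s)\le \Phi(d,s,\ell):=2^{2d^2\cdot(\ell^{ds}+3)}. \]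
   Context: A multilinear polynomial of degree at most $d$ over $\mathbb{R}^n$ is $p(x)=\sum_{S\subseteq[n],|S|\le d}\widehat{p}(S)\prod_{i\in S}x_i$; $\mathrm{sparsity}(p)$ is the number of nonzero coefficients. $\mathrm{Max\text{-}Sparsity\text{-}Gap}_{\mathbf{X},d}(s)$ is the largest natural number $t$ such that there exist (for some $n$) multilinear polynomials $p,q$ of degree at most $d$ with $\mathrm{sparsity}(p)=s$, $\mathrm{sparsity}(q)=t$, and $p(\mathbf{X}^{\otimes n})$, $q(\mathbf{X}^{\otimes n})$ identically distributed (where $\mathbf{X}^{\otimes n}$ is a vector of $n$ i.i.d. copies of $\mathbf{X}$), while no such pair exists with $\mathrm{sparsity}(q)>t$. *)

theory Defs
  imports "HOL-Probability.Probability"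
begin

text \<open>A multilinear polynomial over R^n (variables indexed 0..n-1) is represented by its
  coefficient function c :: nat set => real (c S is the coefficient of the monomial prod_{i in S} x_i).\<close>

definition is_mlpoly :: "nat \<Rightarrow> nat \<Rightarrow> (nat set \<Rightarrow> real) \<Rightarrow> bool" where
  "is_mlpoly n d c \<longleftrightarrow> (\<forall>S. c S \<noteq> 0 \<longrightarrow> S \<subseteq> {..<n} \<and> card S \<le> d)"

definition sparsity :: "(nat set \<Rightarrow> real) \<Rightarrow> nat" where
  "sparsity c = card {S. c S \<noteq> 0}"

definition mlpoly_eval :: "nat \<Rightarrow> (nat set \<Rightarrow> real) \<Rightarrow> (nat \<Rightarrow> real) \<Rightarrow> real" where
  "mlpoly_eval n c x = (\<Sum>S\<in>Pow {..<n}. c S * (\<Prod>i\<in>S. x i))"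

definition poly_distr :: "real pmf \<Rightarrow> nat \<Rightarrow> (nat set \<Rightarrow> real) \<Rightarrow> real pmf" where
  "poly_distr X n c = map_pmf (mlpoly_eval n c) (Pi_pmf {..<n} 0 (\<lambda>_. X))"

definition gap_pair :: "real pmf \<Rightarrow> nat \<Rightarrow> nat \<Rightarrow> nat \<Rightarrow> bool" where
  "gap_pair X d s t \<longleftrightarrow> (\<exists>n p q. is_mlpoly n d p \<and> is_mlpoly n d q \<and>
      sparsity p = s \<and> sparsity q = t \<and> poly_distr X n p = poly_distr X n q)"

definition Max_Sparsity_Gap :: "real pmf \<Rightarrow> nat \<Rightarrow> nat \<Rightarrow> nat" where
  "Max_Sparsity_Gap X d s = Max {t. gap_pair X d s t}"

definition Phi :: "nat \<Rightarrow> nat \<Rightarrow> nat \<Rightarrow> nat" where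
  "Phi d s l = 2 ^ (2 * d^2 * (l ^ (d * s) + 3))"

end

theory Submission
  imports Defs
begin

text \<open>
  If p(X^n) and q(X^n) have the same distribution, they have the same set of values on
  supp(X)^n. Since p involves at most d s variables, this set has at most L = l^(d s)
  elements, so q takes at most L values on the cube {a, b}^n for any two support points
  a \<noteq> b (these exist because X has positive variance). A multilinear polynomial of degree d
  with at most L values on such a cube depends on few variables. Its partial derivatives
  are difference quotients along cube edges, so they have at most L^2 values and, by
  induction on d, each depends on few variables. Greedily one finds a large set I of
  variables none of whose derivatives involves another variable of I. By the
  Schwartz--Zippel count each nonzero derivative is nonzero at a 2^-(d-1) fraction of the
  cube, so at some point many derivatives along I are nonzero. Flipping these coordinates
  one at a time changes q by fixed nonzero amounts, producing more distinct values than
  there are flipped coordinates. This bounds the number of variables of q, and hence its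
  sparsity, by a function of d and L alone.
\<close>

section \<open>Subset sums, averaging and independent sets\<close>

lemma sum_Pow_insert:
  assumes "finite A" "v \<notin> A"
  shows "(\<Sum>S\<in>Pow (insert v A). f S) = (\<Sum>S\<in>Pow A. f S + f (insert v S))"
proof -
  have "(\<Sum>S\<in>Pow (insert v A). f S) = (\<Sum>S\<in>Pow A. f S) + (\<Sum>S\<in>insert v ` Pow A. f S)"
    unfolding Pow_insert by (rule sum.union_disjoint) (use assms in auto)
  also have "(\<Sum>S\<in>insert v ` Pow A. f S) = (\<Sum>S\<in>Pow A. f (insert v S))"
    by (rule sum.reindex_cong[where l = "insert v"]) (use assms in \<open>auto simp: inj_on_def\<close>)
  finally show ?thesis
    by (simp add: sum.distrib)
qed

lemma card_subset_sums_ge: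
  fixes w :: "'a \<Rightarrow> 'b::linordered_ab_group_add"
  assumes "finite P" "\<forall>i\<in>P. w i \<noteq> 0"
  shows "card P + 1 \<le> card (sum w ` Pow P)"
  using assms
proof (induction P rule: finite_induct)
  case empty
  then show ?case by simp
next
  case (insert x P)
  let ?S = "sum w ` Pow P"
  have fin: "finite ?S" and ne: "?S \<noteq> {}"
    using insert.hyps by auto
  have shifted: "(+) (w x) ` ?S \<subseteq> sum w ` Pow (insert x P)"
  proof
    fix y assume "y \<in> (+) (w x) ` ?S"
    then obtain U where U: "U \<subseteq> P" "y = w x + sum w U"
      by auto
    then have "y = sum w (insert x U)"
      using insert.hyps finite_subset by (subst sum.insert) auto
    then show "y \<in> sum w ` Pow (insert x P)"
      using U(1) by blast
  qed
  obtain y where y: "y \<in> (+) (w x) ` ?S" "y \<notin> ?S"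
  proof (cases "w x > 0")
    case True
    have "z < w x + Max ?S" if "z \<in> ?S" for z
      using add_strict_increasing[OF True Max_ge[OF fin that]] .
    then have "w x + Max ?S \<notin> ?S"
      by blast
    then show ?thesis
      using that Max_in[OF fin ne] by blast
  next
    case False
    then have "w x < 0"
      using insert.prems by (simp add: neq_iff)
    then have "w x + Min ?S < z" if "z \<in> ?S" for z
      using add_less_le_mono[OF \<open>w x < 0\<close> Min_le[OF fin that]] by simp
    then have "w x + Min ?S \<notin> ?S"
      by blast
    then show ?thesis
      using that Min_in[OF fin ne] by blast
  qed
  have "insert y ?S \<subseteq> sum w ` Pow (insert x P)"
    using y(1) shifted by (auto simp: Pow_insert)
  then have "card (insert y ?S) \<le> card (sum w ` Pow (insert x P))"
    by (rule card_mono[rotated]) (use insert.hyps in simp)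
  moreover have "card (insert y ?S) = card ?S + 1"
    using fin y(2) by simp
  moreover have "card P + 1 \<le> card ?S"
    using insert.IH insert.prems by simp
  ultimately show ?case
    using insert.hyps by simp
qed

lemma exists_element_in_many:
  assumes "finite I" "finite X" "X \<noteq> {}"
    and often: "\<forall>i\<in>I. card X \<le> K * card {x\<in>X. Q i x}"
  shows "\<exists>x\<in>X. card I \<le> K * card {i\<in>I. Q i x}"
proof (rule ccontr)
  assume "\<not> ?thesis"
  then have few: "\<forall>x\<in>X. K * card {i\<in>I. Q i x} < card I"
    by (auto simp: not_le)
  have double_count: "(\<Sum>i\<in>I. card {x\<in>X. Q i x}) = (\<Sum>x\<in>X. card {i\<in>I. Q i x})"
    using sum.swap_restrict[OF assms(1,2), of "\<lambda>_ _. 1::nat" Q] by simp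
  have "card X * card I = (\<Sum>i\<in>I. card X)"
    by simp
  also have "\<dots> \<le> (\<Sum>i\<in>I. K * card {x\<in>X. Q i x})"
    using often by (intro sum_mono) auto
  also have "\<dots> = (\<Sum>x\<in>X. K * card {i\<in>I. Q i x})"
    by (simp add: sum_distrib_left[symmetric] double_count)
  also have "\<dots> < (\<Sum>x\<in>X. card I)"
    using few assms(2,3) by (intro sum_strict_mono) auto
  finally show False
    by simp
qed

lemma exists_large_independent_set:
  assumes "finite V"
    and "\<And>i. i \<in> V \<Longrightarrow> finite (nb i)"
    and "\<And>i. i \<in> V \<Longrightarrow> card (nb i) \<le> D"
    and "\<And>i. i \<in> V \<Longrightarrow> i \<notin> nb i"
    and "\<And>i j. i \<in> V \<Longrightarrow> j \<in> V \<Longrightarrow> j \<in> nb i \<Longrightarrow> i \<in> nb j"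
  shows "\<exists>I\<subseteq>V. card V \<le> (D + 1) * card I \<and> (\<forall>i\<in>I. nb i \<inter> I = {})"
  using assms
proof (induction "card V" arbitrary: V rule: less_induct)
  case less
  show ?case
  proof (cases "V = {}")
    case True
    then show ?thesis by auto
  next
    case False
    then obtain i where i: "i \<in> V"
      by auto
    define V' where "V' = V - insert i (nb i)"
    have sub: "V' \<subseteq> V"
      unfolding V'_def by blast
    have "\<exists>I'\<subseteq>V'. card V' \<le> (D + 1) * card I' \<and> (\<forall>j\<in>I'. nb j \<inter> I' = {})"
    proof (rule less.hyps)
      show "card V' < card V"
        using i less.prems(1) unfolding V'_def by (intro psubset_card_mono) auto
      show "finite V'"
        using sub less.prems(1) by (rule finite_subset)
    qed (use sub less.prems in blast)+
    then obtain I' where I': "I' \<subseteq> V'" "card V' \<le> (D + 1) * card I'"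
      "\<forall>j\<in>I'. nb j \<inter> I' = {}"
      by blast
    have fin_nb: "finite (nb i)"
      using less.prems(2) i .
    have "card V \<le> card (V' \<union> insert i (nb i))"
      using less.prems(1) fin_nb unfolding V'_def by (intro card_mono) auto
    also have "\<dots> \<le> card V' + card (insert i (nb i))"
      by (rule card_Un_le)
    also have "card (insert i (nb i)) \<le> D + 1"
      using less.prems(3)[OF i] fin_nb by (simp add: card_insert_if)
    finally have "card V \<le> card V' + (D + 1)"
      by simp
    moreover have "i \<notin> I'" "finite I'"
      using I'(1) less.prems(1) finite_subset[of I' V] unfolding V'_def by auto
    moreover have "nb i \<inter> I' = {}" "\<forall>j\<in>I'. i \<notin> nb j"
      using I'(1) less.prems(5) i unfolding V'_def by auto
    ultimately show ?thesis
      using I' i sub less.prems(4)[OF i]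
      by (intro exI[of _ "insert i I'"]) auto
  qed
qed

lemma card_le_twice_card_without:
  assumes "finite Z" "\<And>T. T \<in> Z \<Longrightarrow> T - {v} \<in> Z"
  shows "card Z \<le> 2 * card {T\<in>Z. v \<notin> T}"
proof -
  let ?Z' = "{T\<in>Z. v \<notin> T}"
  have "Z \<subseteq> ?Z' \<union> insert v ` ?Z'"
  proof
    fix T assume "T \<in> Z"
    then show "T \<in> ?Z' \<union> insert v ` ?Z'"
      using assms(2)[of T] by (cases "v \<in> T") (auto simp: image_iff insert_absorb)
  qed
  then have "card Z \<le> card (?Z' \<union> insert v ` ?Z')"
    using assms(1) by (intro card_mono) auto
  also have "\<dots> \<le> card ?Z' + card (insert v ` ?Z')"
    by (rule card_Un_le)
  also have "\<dots> \<le> 2 * card ?Z'"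
    using card_image_le[of ?Z' "insert v"] assms(1) by simp
  finally show ?thesis .
qed

section \<open>Multilinear polynomials\<close>

definition mlpoly_vars :: "(nat set \<Rightarrow> real) \<Rightarrow> nat set" where
  "mlpoly_vars c = \<Union>{S. c S \<noteq> 0}"

definition mlpoly_deriv :: "nat \<Rightarrow> (nat set \<Rightarrow> real) \<Rightarrow> nat set \<Rightarrow> real" where
  "mlpoly_deriv v c S = (if v \<in> S then 0 else c (insert v S))"

lemma mem_mlpoly_vars_iff: "i \<in> mlpoly_vars c \<longleftrightarrow> (\<exists>S. c S \<noteq> 0 \<and> i \<in> S)"
  unfolding mlpoly_vars_def by auto

lemma mlpoly_vars_subset: "is_mlpoly n d c \<Longrightarrow> mlpoly_vars c \<subseteq> {..<n}"
  unfolding is_mlpoly_def mlpoly_vars_def by auto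

lemma finite_mlpoly_vars:
  assumes "is_mlpoly n d c"
  shows "finite (mlpoly_vars c)"
  using mlpoly_vars_subset[OF assms] by (rule finite_subset) simp

lemma mlpoly_vars_degree_0:
  assumes "is_mlpoly n 0 c"
  shows "mlpoly_vars c = {}"
proof -
  have "S = {}" if "c S \<noteq> 0" for S
  proof -
    have "S \<subseteq> {..<n}" "card S = 0"
      using assms that unfolding is_mlpoly_def by auto
    then show ?thesis
      using finite_subset[of S "{..<n}"] by simp
  qed
  then show ?thesis
    unfolding mlpoly_vars_def by auto
qed

lemma mem_mlpoly_vars_deriv_iff:
  "j \<in> mlpoly_vars (mlpoly_deriv v c) \<longleftrightarrow> j \<noteq> v \<and> (\<exists>S. c S \<noteq> 0 \<and> v \<in> S \<and> j \<in> S)"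
proof
  assume "j \<in> mlpoly_vars (mlpoly_deriv v c)"
  then obtain S where "mlpoly_deriv v c S \<noteq> 0" "j \<in> S"
    unfolding mem_mlpoly_vars_iff by blast
  then have "v \<notin> S" "c (insert v S) \<noteq> 0" "j \<in> insert v S"
    unfolding mlpoly_deriv_def by (auto split: if_splits)
  then show "j \<noteq> v \<and> (\<exists>S. c S \<noteq> 0 \<and> v \<in> S \<and> j \<in> S)"
    using \<open>j \<in> S\<close> by blast
next
  assume "j \<noteq> v \<and> (\<exists>S. c S \<noteq> 0 \<and> v \<in> S \<and> j \<in> S)"
  then obtain S where "j \<noteq> v" "c S \<noteq> 0" "v \<in> S" "j \<in> S"
    by blast
  then have "mlpoly_deriv v c (S - {v}) \<noteq> 0" "j \<in> S - {v}"
    unfolding mlpoly_deriv_def by (auto simp: insert_absorb)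
  then show "j \<in> mlpoly_vars (mlpoly_deriv v c)"
    unfolding mem_mlpoly_vars_iff by blast
qed

lemma mlpoly_vars_deriv_subset: "mlpoly_vars (mlpoly_deriv v c) \<subseteq> mlpoly_vars c - {v}"
proof
  fix j assume "j \<in> mlpoly_vars (mlpoly_deriv v c)"
  then show "j \<in> mlpoly_vars c - {v}"
    unfolding mem_mlpoly_vars_deriv_iff by (auto simp: mem_mlpoly_vars_iff)
qed

lemma mlpoly_deriv_nonzero:
  assumes "v \<in> mlpoly_vars c"
  obtains S where "mlpoly_deriv v c S \<noteq> 0"
proof -
  obtain S where "c S \<noteq> 0" "v \<in> S"
    using assms unfolding mem_mlpoly_vars_iff by blast
  then have "mlpoly_deriv v c (S - {v}) \<noteq> 0"
    unfolding mlpoly_deriv_def by (simp add: insert_absorb)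
  then show thesis ..
qed

lemma is_mlpoly_deriv:
  assumes "is_mlpoly n (Suc d) c"
  shows "is_mlpoly n d (mlpoly_deriv v c)"
  unfolding is_mlpoly_def
proof (intro allI impI)
  fix S assume "mlpoly_deriv v c S \<noteq> 0"
  then have "v \<notin> S" "c (insert v S) \<noteq> 0"
    unfolding mlpoly_deriv_def by (auto split: if_splits)
  moreover from this have "insert v S \<subseteq> {..<n}" "card (insert v S) \<le> Suc d"
    using assms unfolding is_mlpoly_def by auto
  moreover have "finite S"
    using calculation(3) finite_subset[of S "{..<n}"] by auto
  ultimately show "S \<subseteq> {..<n} \<and> card S \<le> d"
    by simp
qed

lemma mlpoly_eval_cong:
  assumes "\<And>i. i \<in> mlpoly_vars c \<Longrightarrow> x i = y i"
  shows "mlpoly_eval n c x = mlpoly_eval n c y"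
  unfolding mlpoly_eval_def
proof (intro sum.cong refl)
  fix S
  show "c S * prod x S = c S * prod y S"
    using assms by (cases "c S = 0") (auto simp: mem_mlpoly_vars_iff intro!: prod.cong)
qed

lemma mlpoly_eval_const:
  assumes "mlpoly_vars c = {}"
  shows "mlpoly_eval n c x = c {}"
proof -
  have "c S = 0" if "S \<noteq> {}" for S
    using assms that unfolding mlpoly_vars_def by auto
  then have "mlpoly_eval n c x = (\<Sum>S\<in>{{}}. c S * prod x S)"
    unfolding mlpoly_eval_def by (intro sum.mono_neutral_right) auto
  then show ?thesis
    by simp
qed

lemma mlpoly_eval_fun_upd_diff:
  assumes "v < n"
  shows "mlpoly_eval n c (x(v := b)) - mlpoly_eval n c (x(v := a))
    = (b - a) * mlpoly_eval n (mlpoly_deriv v c) x"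
proof -
  define N where "N = {..<n} - {v}"
  have split: "{..<n} = insert v N" and fin: "finite N" and v: "v \<notin> N"
    using assms unfolding N_def by auto
  have prod_upd: "prod (x(v := t)) S = prod x S" "prod (x(v := t)) (insert v S) = t * prod x S"
    if "S \<in> Pow N" for S t
  proof -
    have S: "finite S" "v \<notin> S"
      using that v finite_subset[OF _ fin] by auto
    then show "prod (x(v := t)) S = prod x S"
      by (intro prod.cong) auto
    moreover have "prod (x(v := t)) (insert v S) = (x(v := t)) v * prod (x(v := t)) S"
      by (rule prod.insert[OF S])
    ultimately show "prod (x(v := t)) (insert v S) = t * prod x S"
      by simp
  qed
  have eval_upd: "mlpoly_eval n c (x(v := t))
    = (\<Sum>S\<in>Pow N. c S * prod x S) + t * (\<Sum>S\<in>Pow N. c (insert v S) * prod x S)" for t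
  proof -
    have "mlpoly_eval n c (x(v := t))
      = (\<Sum>S\<in>Pow N. c S * prod (x(v := t)) S + c (insert v S) * prod (x(v := t)) (insert v S))"
      unfolding mlpoly_eval_def split by (rule sum_Pow_insert[OF fin v])
    also have "\<dots> = (\<Sum>S\<in>Pow N. c S * prod x S + t * (c (insert v S) * prod x S))"
      by (intro sum.cong refl) (simp add: prod_upd del: fun_upd_apply)
    finally show ?thesis
      by (simp add: sum.distrib sum_distrib_left)
  qed
  have "mlpoly_eval n (mlpoly_deriv v c) x = (\<Sum>S\<in>Pow N. c (insert v S) * prod x S)"
    unfolding mlpoly_eval_def split sum_Pow_insert[OF fin v]
    using v by (intro sum.cong) (auto simp: mlpoly_deriv_def)
  then show ?thesis
    unfolding eval_upd by (simp add: algebra_simps)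
qed

lemma sparsity_le_card_vars_power:
  assumes "is_mlpoly n d c"
  shows "sparsity c \<le> (card (mlpoly_vars c) + 1) ^ d"
proof -
  let ?V = "mlpoly_vars c"
  let ?J = "card ?V"
  have fin: "finite ?V"
    using finite_mlpoly_vars[OF assms] .
  have "{S. c S \<noteq> 0} \<subseteq> (\<Union>k\<le>d. {B. B \<subseteq> ?V \<and> card B = k})"
    using assms unfolding is_mlpoly_def mlpoly_vars_def by auto
  then have "sparsity c \<le> card (\<Union>k\<le>d. {B. B \<subseteq> ?V \<and> card B = k})"
    unfolding sparsity_def using fin by (intro card_mono) auto
  also have "\<dots> \<le> (\<Sum>k\<le>d. card {B. B \<subseteq> ?V \<and> card B = k})"
    by (rule card_UN_le) simp
  also have "\<dots> = (\<Sum>k\<le>d. ?J choose k)"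
    using n_subsets[OF fin] by simp
  also have "\<dots> \<le> (\<Sum>k\<le>d. (d choose k) * ?J ^ k * 1 ^ (d - k))"
  proof (rule sum_mono)
    fix k assume "k \<in> {..d}"
    have "?J choose k \<le> ?J ^ k"
      by (cases "k \<le> ?J") (simp_all add: binomial_le_pow binomial_eq_0)
    also have "\<dots> \<le> (d choose k) * ?J ^ k"
      using mult_le_mono1[of 1 "d choose k" "?J ^ k"] \<open>k \<in> {..d}\<close> by (simp add: Suc_le_eq)
    finally show "?J choose k \<le> (d choose k) * ?J ^ k * 1 ^ (d - k)"
      by simp
  qed
  also have "\<dots> = (?J + 1) ^ d"
    using binomial_ring[of ?J 1 d] by simp
  finally show ?thesis .
qed

lemma card_mlpoly_vars_le:
  assumes "is_mlpoly n d c"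
  shows "card (mlpoly_vars c) \<le> d * sparsity c"
proof -
  have "card (mlpoly_vars c) \<le> sum card {S. c S \<noteq> 0}"
    unfolding mlpoly_vars_def by (rule card_Union_le_sum_card)
  also have "\<dots> \<le> of_nat (card {S. c S \<noteq> 0}) * d"
    using assms unfolding is_mlpoly_def by (intro sum_bounded_above) auto
  finally show ?thesis
    unfolding sparsity_def by (simp add: mult.commute)
qed

lemma card_mlpoly_eval_image_le:
  assumes "is_mlpoly n d c" "finite A"
  shows "card (mlpoly_eval n c ` PiE_dflt {..<n} 0 (\<lambda>_. A)) \<le> card A ^ card (mlpoly_vars c)"
proof -
  let ?W = "mlpoly_vars c"
  have W: "?W \<subseteq> {..<n}" "finite ?W"
    using mlpoly_vars_subset[OF assms(1)] finite_mlpoly_vars[OF assms(1)] .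
  let ?restrict = "\<lambda>x i. if i \<in> ?W then x i else 0"
  have "mlpoly_eval n c ` PiE_dflt {..<n} 0 (\<lambda>_. A) \<subseteq> mlpoly_eval n c ` PiE_dflt ?W 0 (\<lambda>_. A)"
  proof (rule image_subsetI)
    fix x assume "x \<in> PiE_dflt {..<n} 0 (\<lambda>_. A)"
    then have "?restrict x \<in> PiE_dflt ?W 0 (\<lambda>_. A)"
      using W(1) unfolding PiE_dflt_def by auto
    moreover have "mlpoly_eval n c x = mlpoly_eval n c (?restrict x)"
      by (rule mlpoly_eval_cong) simp
    ultimately show "mlpoly_eval n c x \<in> mlpoly_eval n c ` PiE_dflt ?W 0 (\<lambda>_. A)"
      by blast
  qed
  then have "card (mlpoly_eval n c ` PiE_dflt {..<n} 0 (\<lambda>_. A))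
      \<le> card (mlpoly_eval n c ` PiE_dflt ?W 0 (\<lambda>_. A))"
    using W(2) assms(2) by (intro card_mono) auto
  also have "\<dots> \<le> card (PiE_dflt ?W 0 (\<lambda>_. A))"
    using W(2) assms(2) by (intro card_image_le) auto
  also have "\<dots> = card A ^ card ?W"
    using W(2) assms(2) by (simp add: card_PiE_dflt)
  finally show ?thesis .
qed

section \<open>Multilinear polynomials on a two-point cube\<close>

locale two_point_cube =
  fixes a b :: real and n :: nat
  assumes a_ne_b: "a \<noteq> b"
begin

text \<open>
  For T \<subseteq> {..<n}, point T is the cube point with coordinate b exactly on T; the value 0
  outside {..<n} makes it an element of PiE_dflt {..<n} 0 (\<lambda>_. {a, b}).
\<close>

definition point :: "nat set \<Rightarrow> nat \<Rightarrow> real" where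
  "point T i = (if i \<in> T then b else if i < n then a else 0)"

definition eval_at :: "(nat set \<Rightarrow> real) \<Rightarrow> nat set \<Rightarrow> real" where
  "eval_at c T = mlpoly_eval n c (point T)"

definition value_set :: "(nat set \<Rightarrow> real) \<Rightarrow> real set" where
  "value_set c = eval_at c ` Pow {..<n}"

lemma finite_value_set: "finite (value_set c)"
  unfolding value_set_def by simp

lemma eval_at_cong:
  assumes "\<And>i. i \<in> mlpoly_vars c \<Longrightarrow> i \<in> T \<longleftrightarrow> i \<in> T'"
  shows "eval_at c T = eval_at c T'"
  unfolding eval_at_def using assms by (intro mlpoly_eval_cong) (simp add: point_def)

lemma eval_at_insert_diff:
  assumes "v < n"
  shows "eval_at c (insert v T) - eval_at c (T - {v}) = (b - a) * eval_at (mlpoly_deriv v c) T"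
proof -
  have "point (insert v T) = (point T)(v := b)" "point (T - {v}) = (point T)(v := a)"
    using assms by (auto simp: point_def)
  then show ?thesis
    unfolding eval_at_def using mlpoly_eval_fun_upd_diff[OF assms] by simp
qed

lemma nonzero_points_const:
  assumes "mlpoly_vars c = {}" "c S \<noteq> 0"
  shows "{T\<in>Pow {..<n}. eval_at c T \<noteq> 0} = Pow {..<n}"
proof -
  have "S = {}"
    using assms unfolding mlpoly_vars_def by auto
  then show ?thesis
    using assms mlpoly_eval_const unfolding eval_at_def by auto
qed

lemma card_nonzero_points_deriv_le:
  assumes "v < n"
  shows "card {T\<in>Pow {..<n}. eval_at (mlpoly_deriv v c) T \<noteq> 0}
    \<le> 2 * card {T\<in>Pow {..<n}. eval_at c T \<noteq> 0}"
proof -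
  let ?D = "mlpoly_deriv v c"
  let ?Z = "{T\<in>Pow {..<n}. eval_at ?D T \<noteq> 0}"
  let ?Zc = "{T\<in>Pow {..<n}. eval_at c T \<noteq> 0}"
  have "card ?Z \<le> 2 * card {T\<in>?Z. v \<notin> T}"
  proof (rule card_le_twice_card_without)
    fix T assume "T \<in> ?Z"
    moreover have "eval_at ?D (T - {v}) = eval_at ?D T"
      using mlpoly_vars_deriv_subset[of v c] by (intro eval_at_cong) auto
    ultimately show "T - {v} \<in> ?Z"
      by auto
  qed simp
  moreover have "card {T\<in>?Z. v \<notin> T} \<le> card ?Zc"
  proof (rule card_inj_on_le)
    let ?f = "\<lambda>T. if eval_at c T \<noteq> 0 then T else insert v T"
    show "inj_on ?f {T\<in>?Z. v \<notin> T}"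
      by (rule inj_on_inverseI[where g = "\<lambda>T. T - {v}"]) auto
    show "?f ` {T\<in>?Z. v \<notin> T} \<subseteq> ?Zc"
    proof (rule image_subsetI)
      fix T assume "T \<in> {T\<in>?Z. v \<notin> T}"
      moreover from this have "eval_at c (insert v T) - eval_at c T \<noteq> 0"
        using eval_at_insert_diff[OF assms, of c T] a_ne_b by simp
      ultimately show "?f T \<in> ?Zc"
        using assms by auto
    qed
  qed simp
  ultimately show ?thesis
    by simp
qed

lemma card_nonzero_points_ge:
  assumes "is_mlpoly n e c" "c S \<noteq> 0"
  shows "2 ^ n \<le> 2 ^ e * card {T\<in>Pow {..<n}. eval_at c T \<noteq> 0}"
  using assms
proof (induction e arbitrary: c S)
  case 0
  then show ?case
    using nonzero_points_const mlpoly_vars_degree_0 by (simp add: card_Pow)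
next
  case (Suc e)
  let ?Zc = "{T\<in>Pow {..<n}. eval_at c T \<noteq> 0}"
  show ?case
  proof (cases "mlpoly_vars c = {}")
    case True
    then have "2 ^ n \<le> card ?Zc"
      using nonzero_points_const Suc.prems(2) by (simp add: card_Pow)
    then show ?thesis
      using le_trans mult_le_mono1[of 1 "2 ^ Suc e" "card ?Zc"] by fastforce
  next
    case False
    then obtain v where v: "v \<in> mlpoly_vars c"
      by blast
    then have "v < n"
      using mlpoly_vars_subset[OF Suc.prems(1)] by auto
    obtain S' where "mlpoly_deriv v c S' \<noteq> 0"
      using mlpoly_deriv_nonzero[OF v] .
    then have "2 ^ n \<le> 2 ^ e * card {T\<in>Pow {..<n}. eval_at (mlpoly_deriv v c) T \<noteq> 0}"
      using Suc.IH is_mlpoly_deriv[OF Suc.prems(1)] by blast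
    also have "\<dots> \<le> 2 ^ e * (2 * card ?Zc)"
      using card_nonzero_points_deriv_le[OF \<open>v < n\<close>] by simp
    also have "\<dots> = 2 ^ Suc e * card ?Zc"
      by simp
    finally show ?thesis .
  qed
qed

lemma exists_point_many_nonzero_derivs:
  assumes "is_mlpoly n (Suc d) c" "I \<subseteq> mlpoly_vars c"
  obtains T where "T \<subseteq> {..<n}"
    "card I \<le> 2 ^ d * card {i\<in>I. eval_at (mlpoly_deriv i c) T \<noteq> 0}"
proof -
  have "card (Pow {..<n}) \<le> 2 ^ d * card {T\<in>Pow {..<n}. eval_at (mlpoly_deriv i c) T \<noteq> 0}"
    if i: "i \<in> I" for i
  proof -
    obtain S where "mlpoly_deriv i c S \<noteq> 0"
      using mlpoly_deriv_nonzero[of i c] i assms(2) by blast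
    then show ?thesis
      using card_nonzero_points_ge[OF is_mlpoly_deriv[OF assms(1)]] by (simp add: card_Pow)
  qed
  moreover have "finite I"
    using assms(2) finite_mlpoly_vars[OF assms(1)] by (rule finite_subset)
  ultimately show thesis
    using that exists_element_in_many[of I "Pow {..<n}" "2 ^ d"
        "\<lambda>i T. eval_at (mlpoly_deriv i c) T \<noteq> 0"]
    by auto
qed

lemma card_value_set_deriv_le:
  assumes "v < n"
  shows "card (value_set (mlpoly_deriv v c)) \<le> card (value_set c) ^ 2"
proof -
  let ?quot = "\<lambda>(u, w). (u - w) / (b - a)"
  have "value_set (mlpoly_deriv v c) \<subseteq> ?quot ` (value_set c \<times> value_set c)"
  proof
    fix y assume "y \<in> value_set (mlpoly_deriv v c)"
    then obtain T where T: "T \<subseteq> {..<n}" "y = eval_at (mlpoly_deriv v c) T"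
      unfolding value_set_def by auto
    then have "y = ?quot (eval_at c (insert v T), eval_at c (T - {v}))"
      using eval_at_insert_diff[OF assms, of c T] a_ne_b by simp
    moreover have "eval_at c (insert v T) \<in> value_set c" "eval_at c (T - {v}) \<in> value_set c"
      using T assms unfolding value_set_def by auto
    ultimately show "y \<in> ?quot ` (value_set c \<times> value_set c)"
      by blast
  qed
  then have "card (value_set (mlpoly_deriv v c)) \<le> card (?quot ` (value_set c \<times> value_set c))"
    by (intro card_mono) (simp_all add: finite_value_set)
  also have "\<dots> \<le> card (value_set c \<times> value_set c)"
    by (rule card_image_le) (simp add: finite_value_set)
  finally show ?thesis
    by (simp add: card_cartesian_product power2_eq_square)
qed

lemma eval_at_flip_independent:
  assumes "P \<subseteq> {..<n}" "\<forall>i\<in>P. mlpoly_vars (mlpoly_deriv i c) \<inter> P = {}" "U \<subseteq> P"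
  shows "eval_at c ((T - P) \<union> U)
    = eval_at c (T - P) + (\<Sum>i\<in>U. (b - a) * eval_at (mlpoly_deriv i c) T)"
proof -
  have "finite U"
    using assms(1,3) finite_subset[of U "{..<n}"] by auto
  then show ?thesis
    using assms(3)
  proof (induction U rule: finite_induct)
    case empty
    then show ?case by simp
  next
    case (insert j U)
    let ?G = "(T - P) \<union> U"
    have j: "j \<in> P" "j \<notin> ?G" "j < n"
      using insert assms(1) by auto
    have "eval_at (mlpoly_deriv j c) ?G = eval_at (mlpoly_deriv j c) T"
      using assms(2) j(1) insert.prems by (intro eval_at_cong) auto
    moreover have "eval_at c (insert j ?G) - eval_at c ?G = (b - a) * eval_at (mlpoly_deriv j c) ?G"
      using eval_at_insert_diff[OF j(3), of c ?G] j(2) by simp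
    moreover have "(T - P) \<union> insert j U = insert j ?G"
      by auto
    ultimately show ?case
      using insert by simp
  qed
qed

lemma card_value_set_gt_independent:
  assumes "P \<subseteq> {..<n}" "T \<subseteq> {..<n}"
    and "\<forall>i\<in>P. mlpoly_vars (mlpoly_deriv i c) \<inter> P = {}"
    and "\<forall>i\<in>P. eval_at (mlpoly_deriv i c) T \<noteq> 0"
  shows "card P + 1 \<le> card (value_set c)"
proof -
  define w where "w i = (b - a) * eval_at (mlpoly_deriv i c) T" for i
  have "card P + 1 \<le> card (sum w ` Pow P)"
    using assms(1,4) a_ne_b finite_subset[of P "{..<n}"]
    by (intro card_subset_sums_ge) (auto simp: w_def)
  also have "\<dots> = card ((+) (eval_at c (T - P)) ` sum w ` Pow P)"
    by (simp add: card_image)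
  also have "\<dots> \<le> card (value_set c)"
  proof (intro card_mono finite_value_set image_subsetI)
    fix y assume "y \<in> sum w ` Pow P"
    then obtain U where "U \<subseteq> P" "y = sum w U"
      by blast
    then have "eval_at c (T - P) + y = eval_at c ((T - P) \<union> U)"
      using eval_at_flip_independent[OF assms(1,3)] unfolding w_def by simp
    moreover have "(T - P) \<union> U \<subseteq> {..<n}"
      using \<open>U \<subseteq> P\<close> assms(1,2) by auto
    ultimately show "eval_at c (T - P) + y \<in> value_set c"
      unfolding value_set_def by auto
  qed
  finally show ?thesis .
qed

lemma value_set_subset_image:
  assumes "a \<in> A" "b \<in> A"
  shows "value_set c \<subseteq> mlpoly_eval n c ` PiE_dflt {..<n} 0 (\<lambda>_. A)"
proof
  fix y assume "y \<in> value_set c"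
  then obtain T where "T \<subseteq> {..<n}" "y = mlpoly_eval n c (point T)"
    unfolding value_set_def eval_at_def by auto
  moreover from this have "point T \<in> PiE_dflt {..<n} 0 (\<lambda>_. A)"
    using assms unfolding PiE_dflt_def point_def by auto
  ultimately show "y \<in> mlpoly_eval n c ` PiE_dflt {..<n} 0 (\<lambda>_. A)"
    by blast
qed

end

section \<open>Few values force few variables\<close>

text \<open>
  The recursion mirrors the induction step: D + 1 for the greedy independent set, where D
  bounds the variables of a derivative (with at most R^2 values), 2^d from the
  Schwartz--Zippel count, and R - 1 from the distinct values produced by flipping.
\<close>

fun junta_bound :: "nat \<Rightarrow> nat \<Rightarrow> nat" where
  "junta_bound 0 R = 0"
| "junta_bound (Suc d) R = (junta_bound d (R^2) + 1) * (R - 1) * 2^d"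

theorem (in two_point_cube) card_mlpoly_vars_le_junta_bound:
  assumes "is_mlpoly n d c" "card (value_set c) \<le> R"
  shows "card (mlpoly_vars c) \<le> junta_bound d R"
  using assms
proof (induction d arbitrary: c R)
  case 0
  then show ?case
    using mlpoly_vars_degree_0 by simp
next
  case (Suc d)
  let ?V = "mlpoly_vars c"
  let ?nb = "\<lambda>i. mlpoly_vars (mlpoly_deriv i c)"
  define D where "D = junta_bound d (R^2)"
  have V: "?V \<subseteq> {..<n}" "finite ?V"
    using mlpoly_vars_subset finite_mlpoly_vars Suc.prems(1) by auto
  have deg: "is_mlpoly n d (mlpoly_deriv i c)" for i
    using is_mlpoly_deriv Suc.prems(1) .
  have "card (?nb i) \<le> D" if "i \<in> ?V" for i
  proof -
    have "card (value_set (mlpoly_deriv i c)) \<le> card (value_set c) ^ 2"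
      using card_value_set_deriv_le that V(1) by auto
    also have "\<dots> \<le> R^2"
      using Suc.prems(2) by (simp add: power_mono)
    finally show ?thesis
      unfolding D_def using Suc.IH[OF deg] by blast
  qed
  moreover have "i \<notin> ?nb i" "j \<in> ?nb i \<Longrightarrow> i \<in> ?nb j" for i j
    unfolding mem_mlpoly_vars_deriv_iff by blast+
  ultimately obtain I where I: "I \<subseteq> ?V" "card ?V \<le> (D + 1) * card I"
    "\<forall>i\<in>I. ?nb i \<inter> I = {}"
    using exists_large_independent_set[OF V(2), of ?nb D] finite_mlpoly_vars[OF deg] by blast
  obtain T where T: "T \<subseteq> {..<n}"
    "card I \<le> 2 ^ d * card {i\<in>I. eval_at (mlpoly_deriv i c) T \<noteq> 0}"
    using exists_point_many_nonzero_derivs[OF Suc.prems(1) I(1)] .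
  let ?P = "{i\<in>I. eval_at (mlpoly_deriv i c) T \<noteq> 0}"
  have "card ?P + 1 \<le> card (value_set c)"
    using I(1,3) V(1) T(1) by (intro card_value_set_gt_independent[where T = T]) auto
  then have "card ?P \<le> R - 1"
    using Suc.prems(2) by simp
  have "card ?V \<le> (D + 1) * (2 ^ d * card ?P)"
    using I(2) T(2) by (meson le_trans mult_le_mono2)
  also have "\<dots> \<le> (D + 1) * (2 ^ d * (R - 1))"
    using \<open>card ?P \<le> R - 1\<close> by (intro mult_le_mono2) simp
  also have "\<dots> = junta_bound (Suc d) R"
    unfolding D_def by (simp only: junta_bound.simps mult_ac)
  finally show ?case .
qed

lemma junta_bound_plus_one_le:
  assumes "R \<ge> 1"
  shows "junta_bound d R + 1 \<le> R ^ (2 ^ d - 1) * 2 ^ (d * d)"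
  using assms
proof (induction d arbitrary: R)
  case 0
  then show ?case by simp
next
  case (Suc d)
  define B where "B = junta_bound d (R^2) + 1"
  have "B \<ge> 1"
    unfolding B_def by simp
  have IH: "B \<le> (R^2) ^ (2 ^ d - 1) * 2 ^ (d * d)"
    unfolding B_def using Suc.IH[of "R^2"] Suc.prems by simp
  have "junta_bound (Suc d) R + 1 = B * (R - 1) * 2 ^ d + 1"
    unfolding B_def by simp
  also have "\<dots> \<le> B * (R - 1) * 2 ^ d + B * 2 ^ d"
    using \<open>B \<ge> 1\<close> by simp
  also have "\<dots> = B * R * 2 ^ d"
    using Suc.prems by (cases R) (auto simp: algebra_simps)
  also have "\<dots> \<le> (R^2) ^ (2 ^ d - 1) * 2 ^ (d * d) * R * 2 ^ d"
    using IH by simp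
  also have "\<dots> = R ^ (2 * (2 ^ d - 1) + 1) * 2 ^ (d * d + d)"
    by (simp only: power_mult[symmetric] power_add power_one_right mult_ac)
  also have "2 * (2 ^ d - 1) + 1 = (2::nat) ^ Suc d - 1"
    using one_le_power[of "2::nat" d] by (cases "(2::nat) ^ d") auto
  also have "(2::nat) ^ (d * d + d) \<le> 2 ^ (Suc d * Suc d)"
    by (intro power_increasing) auto
  finally show ?case
    by simp
qed

text \<open>Each step from L to L + 1 multiplies the left-hand side by (1 + 1/L)^(2^d) \<le> e < 2^(d+1).\<close>

lemma power_two_power_le:
  assumes "d \<ge> 1" "2 ^ d \<le> L"
  shows "L ^ (2 ^ d) \<le> (2::nat) ^ ((d + 1) * L)"
  using assms(2)
proof (induction L rule: dec_induct)
  case base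
  have "((2::nat) ^ d) ^ (2 ^ d) = 2 ^ (d * 2 ^ d)"
    by (simp add: power_mult)
  also have "\<dots> \<le> 2 ^ ((d + 1) * 2 ^ d)"
    by (intro power_increasing) auto
  finally show ?case .
next
  case (step L)
  define m :: nat where "m = 2 ^ d"
  have "L > 0"
    using step.hyps(1) by (metis le_zero_eq neq0_conv power_eq_0_iff zero_neq_numeral)
  have "1 + 1 / real L \<le> exp (1 / real L)"
    using exp_ge_add_one_self[of "1 / real L"] by (simp only: add.commute)
  then have "(1 + 1 / real L) ^ m \<le> exp (1 / real L) ^ m"
    by (rule power_mono) simp
  also have "\<dots> = exp (real m * (1 / real L))"
    by (rule exp_of_nat_mult[symmetric])
  also have "\<dots> \<le> exp 1"
    using step.hyps(1) \<open>L > 0\<close> unfolding m_def by (simp add: field_simps)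
  also have "\<dots> \<le> 3"
    by (rule exp_le)
  finally have growth: "(1 + 1 / real L) ^ m \<le> 3" .
  have "real ((L + 1) ^ m) = real L ^ m * (1 + 1 / real L) ^ m"
    using \<open>L > 0\<close> by (simp add: power_mult_distrib[symmetric] field_simps)
  also have "\<dots> \<le> real L ^ m * 3"
    using growth by (intro mult_left_mono) auto
  finally have "real ((L + 1) ^ m) \<le> real (L ^ m * 3)"
    by simp
  then have "(L + 1) ^ m \<le> L ^ m * 3"
    by (simp only: of_nat_le_iff)
  also have "\<dots> \<le> L ^ m * 2 ^ (d + 1)"
  proof -
    have "(2::nat) ^ 2 \<le> 2 ^ (d + 1)"
      using assms(1) by (intro power_increasing) auto
    then show ?thesis
      by (intro mult_left_mono) auto
  qed
  also have "\<dots> \<le> 2 ^ ((d + 1) * L) * 2 ^ (d + 1)"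
    using step.IH unfolding m_def by simp
  also have "\<dots> = 2 ^ ((d + 1) * Suc L)"
    by (simp add: power_add[symmetric] algebra_simps)
  finally show ?case
    unfolding m_def by simp
qed

lemma junta_bound_power_le:
  assumes "d \<ge> 1" "2 ^ d \<le> L"
  shows "(junta_bound d L + 1) ^ d \<le> 2 ^ (2 * d^2 * (L + 3))"
proof -
  have "L \<ge> 1"
    using assms(2) one_le_power[of "2::nat" d] by linarith
  have "d \<le> L"
    using assms(2) less_exp[of d] by linarith
  have "junta_bound d L + 1 \<le> L ^ (2 ^ d - 1) * 2 ^ (d * d)"
    using junta_bound_plus_one_le[OF \<open>L \<ge> 1\<close>] .
  also have "\<dots> \<le> L ^ (2 ^ d) * 2 ^ (d * d)"
    using \<open>L \<ge> 1\<close> by (intro mult_right_mono power_increasing) auto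
  also have "\<dots> \<le> 2 ^ ((d + 1) * L) * 2 ^ (d * d)"
    using power_two_power_le[OF assms] by simp
  also have "\<dots> = 2 ^ ((d + 1) * L + d * d)"
    by (simp add: power_add)
  also have "\<dots> \<le> 2 ^ (2 * d * (L + 3))"
  proof (intro power_increasing)
    have "(d - 1) * d \<le> (d - 1) * L"
      using \<open>d \<le> L\<close> by simp
    then have "d * d \<le> (d - 1) * L + d"
      using assms(1) by (cases d) (auto simp: algebra_simps)
    then show "(d + 1) * L + d * d \<le> 2 * d * (L + 3)"
      using assms(1) by (cases d) (auto simp: algebra_simps)
  qed auto
  finally have "(junta_bound d L + 1) ^ d \<le> (2 ^ (2 * d * (L + 3))) ^ d"
    by (rule power_mono) simp
  also have "\<dots> = 2 ^ (2 * d^2 * (L + 3))"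
    by (simp add: power_mult[symmetric] power2_eq_square algebra_simps)
  finally show ?thesis .
qed

section \<open>The sparsity gap\<close>

lemma set_pmf_poly_distr:
  "set_pmf (poly_distr X n c) = mlpoly_eval n c ` PiE_dflt {..<n} 0 (\<lambda>_. set_pmf X)"
  unfolding poly_distr_def by (simp add: set_Pi_pmf comp_def)

lemma two_points_if_variance_nonzero:
  fixes X :: "real pmf"
  assumes "measure_pmf.variance X (\<lambda>x. x) \<noteq> 0"
  obtains a b where "a \<in> set_pmf X" "b \<in> set_pmf X" "a \<noteq> b"
proof -
  obtain a where a: "a \<in> set_pmf X"
    using set_pmf_not_empty[of X] by blast
  have "X \<noteq> return_pmf a"
    using assms by (auto simp: expectation_return_pmf)
  then obtain b where "b \<in> set_pmf X" "b \<noteq> a"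
    unfolding set_pmf_subset_singleton[symmetric] by blast
  then show thesis
    using that a by blast
qed

lemma (in two_point_cube) card_value_set_le_if_same_distr:
  assumes "finite (set_pmf X)" "a \<in> set_pmf X" "b \<in> set_pmf X"
    and "is_mlpoly n d p" "poly_distr X n p = poly_distr X n q"
  shows "card (value_set q) \<le> card (set_pmf X) ^ (d * sparsity p)"
proof -
  let ?G = "PiE_dflt {..<n} 0 (\<lambda>_. set_pmf X)"
  have "value_set q \<subseteq> mlpoly_eval n p ` ?G"
    using value_set_subset_image[OF assms(2,3), of q] assms(5)
      set_pmf_poly_distr[of X n p] set_pmf_poly_distr[of X n q] by simp
  then have "card (value_set q) \<le> card (mlpoly_eval n p ` ?G)"
    using assms(1) by (intro card_mono finite_imageI finite_PiE_dflt) auto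
  also have "\<dots> \<le> card (set_pmf X) ^ card (mlpoly_vars p)"
    using card_mlpoly_eval_image_le[OF assms(4,1)] .
  also have "\<dots> \<le> card (set_pmf X) ^ (d * sparsity p)"
    using card_mlpoly_vars_le[OF assms(4)] assms(2,3) a_ne_b card_gt_0_iff[of "set_pmf X"] assms(1)
    by (intro power_increasing) auto
  finally show ?thesis .
qed

lemma sparsity_le_Phi:
  fixes X :: "real pmf"
  assumes "finite (set_pmf X)" "measure_pmf.variance X (\<lambda>x. x) \<noteq> 0"
    and "card (set_pmf X) \<le> l" "d \<ge> 1" "s \<ge> 1"
    and "is_mlpoly n d p" "is_mlpoly n d q" "sparsity p = s"
    and "poly_distr X n p = poly_distr X n q"
  shows "sparsity q \<le> Phi d s l"
proof -
  obtain a b where ab: "a \<in> set_pmf X" "b \<in> set_pmf X" "a \<noteq> b"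
    using two_points_if_variance_nonzero[OF assms(2)] .
  interpret two_point_cube a b n
    using ab(3) by unfold_locales
  define L where "L = l ^ (d * s)"
  have "2 \<le> l"
    using card_mono[OF assms(1), of "{a, b}"] ab assms(3) by simp
  have "(2::nat) ^ d \<le> 2 ^ (d * s)"
    using assms(5) by (intro power_increasing) simp_all
  also have "\<dots> \<le> L"
    unfolding L_def using \<open>2 \<le> l\<close> by (rule power_mono) simp
  finally have "2 ^ d \<le> L" .
  have "card (value_set q) \<le> card (set_pmf X) ^ (d * s)"
    using card_value_set_le_if_same_distr[OF assms(1) ab(1,2) assms(6,9)] assms(8) by simp
  also have "\<dots> \<le> L"
    unfolding L_def using assms(3) by (rule power_mono) simp
  finally have "card (mlpoly_vars q) \<le> junta_bound d L"
    using card_mlpoly_vars_le_junta_bound[OF assms(7)] by blast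
  then have "sparsity q \<le> (junta_bound d L + 1) ^ d"
    using sparsity_le_card_vars_power[OF assms(7)] by (meson add_le_mono1 le_trans power_mono zero_le)
  also have "\<dots> \<le> 2 ^ (2 * d^2 * (L + 3))"
    using junta_bound_power_le[OF assms(4) \<open>2 ^ d \<le> L\<close>] .
  finally show ?thesis
    unfolding Phi_def L_def .
qed

lemma gap_pair_refl:
  assumes "d \<ge> 1"
  shows "gap_pair X d s s"
proof -
  define c :: "nat set \<Rightarrow> real"
    where "c S = (if S \<in> (\<lambda>i. {i}) ` {..<s} then 1 else 0)" for S
  have "is_mlpoly s d c"
    unfolding is_mlpoly_def c_def using assms by auto
  moreover have "{S. c S \<noteq> 0} = (\<lambda>i. {i}) ` {..<s}"
    unfolding c_def by auto
  then have "sparsity c = s"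
    unfolding sparsity_def by (simp add: card_image)
  ultimately show ?thesis
    unfolding gap_pair_def by blast
qed

theorem theorem1p5:
  fixes X :: "real pmf" and l d s :: nat
  assumes "finite (set_pmf X)"
    and "measure_pmf.expectation X (\<lambda>x. x) = 0"
    and "measure_pmf.variance X (\<lambda>x. x) = 1"
    and "card (set_pmf X) \<le> l"
    and "d \<ge> 1" and "s \<ge> 1"
  shows "\<not> (\<exists>n p q. is_mlpoly n d p \<and> is_mlpoly n d q \<and> sparsity p = s \<and>
              sparsity q > Phi d s l \<and> poly_distr X n p = poly_distr X n q)
         \<and> {t. gap_pair X d s t} \<noteq> {} \<and> finite {t. gap_pair X d s t}
         \<and> Max_Sparsity_Gap X d s \<le> Phi d s l"
proof -
  have bound: "sparsity q \<le> Phi d s l"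
    if "is_mlpoly n d p" "is_mlpoly n d q" "sparsity p = s" "poly_distr X n p = poly_distr X n q"
    for n p q
    using sparsity_le_Phi[OF assms(1) _ assms(4-6) that] assms(3) by simp
  then have gaps: "{t. gap_pair X d s t} \<subseteq> {..Phi d s l}"
    unfolding gap_pair_def by auto
  moreover have "gap_pair X d s s"
    using gap_pair_refl[OF assms(5)] .
  ultimately have "{t. gap_pair X d s t} \<noteq> {}" "finite {t. gap_pair X d s t}"
    using finite_subset by auto
  then show ?thesis
    using bound gaps unfolding Max_Sparsity_Gap_def by (force simp: not_less)
qed

end
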